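(* Let $G=\bigl((f_j)_{j=1}^n;(\mu^{R})_{\emptyset\ne R\subseteq[n]}\bigr)$ be an $n$-resource selection game. If $f_1,\ldots,f_n$ are continuous, then a strong Nash equilibrium exists in $G$.
   Context: Write $[n]=\{1,\ldots,n\}$ and $\mathbb{R}_{\ge}=[0,\infty)$. An $n$-resource selection game is a pair $G=\bigl((f_j)_{j=1}^n;(\mu^{R})_{\emptyset\ne R\subseteq[n]}\bigr)$ where each $f_j:\mathbb{R}_{\ge}\to\mathbb{R}$ is nondecreasing and $\mu^R\in\mathbb{R}_{\ge}$ for every nonempty $R\subseteq[n]$ (the mass of players of type $R$, who may use only resources in $R$). A consumption profile is a map $s$ assigning to each nonempty $R\subseteq[n]$ a vector $s(R)\in\mathbb{R}_{\ge}^{[n]}$ with $s_j(R)=0$ for $j\notin R$ and $\sum_{j}s_j(R)=\mu^R$. The load of resource $j$ is $\mu^s_j=\sum_{R}s_j(R)$ and its cost is $h^s_j=f_j(\mu^s_j)$. $s$ is a Nash equilibrium if for every nonempty $R$, every $k$ with $s_k(R)>0$ and every $j\in R$, $h^s_k\le h^s_j$. For a Nash equilibrium $s$ and $R$ with $\mu^R>0$, let $h^R=h^s_k$ for any $k$ with $s_k(R)>0$ (well defined). A Nash equilibrium $s$ is a strong Nash equilibrium if there is no consumption profile $s'\ne s$ such that for every nonempty $R$ and every $k$ with $s'_k(R)>s_k(R)$ one has $h^{s'}_k<h^R$. *)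

theory Defs
  imports "HOL-Analysis.Analysis"
begin

text \<open>Resources are 1..n; player types are the nonempty subsets of {1..n}.
  A profile is s :: nat set => nat => real, s R j = consumption of resource j by type R.\<close>

definition types :: "nat \<Rightarrow> nat set set" where
  "types n = Pow {1..n} - {{}}"

definition is_profile :: "nat \<Rightarrow> (nat set \<Rightarrow> real) \<Rightarrow> (nat set \<Rightarrow> nat \<Rightarrow> real) \<Rightarrow> bool" where
  "is_profile n mu s \<longleftrightarrow>
     (\<forall>R\<in>types n. (\<forall>j\<in>{1..n}. s R j \<ge> 0) \<and> (\<forall>j\<in>{1..n} - R. s R j = 0)
                   \<and> (\<Sum>j\<in>{1..n}. s R j) = mu R)"

definition load :: "nat \<Rightarrow> (nat set \<Rightarrow> nat \<Rightarrow> real) \<Rightarrow> nat \<Rightarrow> real" where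
  "load n s j = (\<Sum>R\<in>types n. s R j)"

definition cost :: "nat \<Rightarrow> (nat \<Rightarrow> real \<Rightarrow> real) \<Rightarrow> (nat set \<Rightarrow> nat \<Rightarrow> real) \<Rightarrow> nat \<Rightarrow> real" where
  "cost n f s j = f j (load n s j)"

definition is_game :: "nat \<Rightarrow> (nat \<Rightarrow> real \<Rightarrow> real) \<Rightarrow> (nat set \<Rightarrow> real) \<Rightarrow> bool" where
  "is_game n f mu \<longleftrightarrow> (\<forall>j\<in>{1..n}. mono_on {0..} (f j)) \<and> (\<forall>R\<in>types n. mu R \<ge> 0)"

definition is_NE :: "nat \<Rightarrow> (nat \<Rightarrow> real \<Rightarrow> real) \<Rightarrow> (nat set \<Rightarrow> real) \<Rightarrow> (nat set \<Rightarrow> nat \<Rightarrow> real) \<Rightarrow> bool" where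
  "is_NE n f mu s \<longleftrightarrow> is_profile n mu s \<and>
     (\<forall>R\<in>types n. \<forall>k\<in>{1..n}. \<forall>j\<in>R. s R k > 0 \<longrightarrow> cost n f s k \<le> cost n f s j)"

text \<open>Equilibrium cost h^R of type R (well defined when mu R > 0 and s is a NE).\<close>
definition eq_cost :: "nat \<Rightarrow> (nat \<Rightarrow> real \<Rightarrow> real) \<Rightarrow> (nat set \<Rightarrow> nat \<Rightarrow> real) \<Rightarrow> nat set \<Rightarrow> real" where
  "eq_cost n f s R = cost n f s (SOME k. k \<in> {1..n} \<and> s R k > 0)"

text \<open>Profiles are compared on their relevant domain (types n x {1..n}).\<close>
definition is_SNE :: "nat \<Rightarrow> (nat \<Rightarrow> real \<Rightarrow> real) \<Rightarrow> (nat set \<Rightarrow> real) \<Rightarrow> (nat set \<Rightarrow> nat \<Rightarrow> real) \<Rightarrow> bool" where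
  "is_SNE n f mu s \<longleftrightarrow> is_NE n f mu s \<and>
     \<not> (\<exists>s'. is_profile n mu s' \<and> (\<exists>R\<in>types n. \<exists>j\<in>{1..n}. s' R j \<noteq> s R j) \<and>
            (\<forall>R\<in>types n. \<forall>k\<in>{1..n}. s' R k > s R k \<longrightarrow> cost n f s' k < eq_cost n f s R))"

end

theory Submission
  imports Defs
begin

text \<open>
  The proof has two independent halves.
  (1) Every Nash equilibrium is already strong.  If a coalition deviates from
      an equilibrium s to s' and every resource whose consumption increases
      becomes strictly cheaper than the equilibrium cost of the player type
      that increases it, then (costs being nondecreasing) the load of that
      resource strictly drops and no load increases at all.  Total load is the
      total mass in both profiles, so no load can drop either; hence nothing
      increases, and since every type spends the same mass, s' = s.
  (2) A Nash equilibrium exists.  The Beckmann potential, the sum over the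
      resources of the primitive of the cost function evaluated at the load,
      is continuous on the compact nonempty set of profiles and so attains a
      minimum.  At a minimiser no type can profitably shift a little mass from
      a resource to a cheaper one, since this would decrease the potential at
      the rate given by the cost difference; so the minimiser is an equilibrium.
\<close>


lemma finite_types: "finite (types n)"
  unfolding types_def by simp

lemma types_subset: "R \<in> types n \<Longrightarrow> R \<subseteq> {1..n}"
  unfolding types_def by auto

lemma load_nonneg: "is_profile n mu s \<Longrightarrow> j \<in> {1..n} \<Longrightarrow> load n s j \<ge> 0"
  unfolding load_def is_profile_def by (auto intro: sum_nonneg)

lemma total_load: "is_profile n mu s \<Longrightarrow> (\<Sum>j\<in>{1..n}. load n s j) = (\<Sum>R\<in>types n. mu R)"
  unfolding load_def is_profile_def by (subst sum.swap) simp

lemma profile_support: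
  assumes "is_profile n mu s" "R \<in> types n" "k \<in> {1..n}" "s R k \<noteq> 0"
  shows "k \<in> R"
  using assms unfolding is_profile_def by blast

lemma profile_entry_le_mass:
  assumes "is_profile n mu s" "R \<in> types n" "j \<in> {1..n}"
  shows "s R j \<le> mu R"
proof -
  have "s R j \<le> (\<Sum>i\<in>{1..n}. s R i)"
    using assms by (intro member_le_sum) (auto simp: is_profile_def)
  also have "\<dots> = mu R" using assms by (simp add: is_profile_def)
  finally show ?thesis .
qed

lemma profile_has_positive_entry:
  assumes "is_profile n mu s" "R \<in> types n" "mu R > 0"
  shows "\<exists>k. k \<in> {1..n} \<and> s R k > 0"
proof (rule ccontr)
  assume "\<not> ?thesis"
  then have "(\<Sum>i\<in>{1..n}. s R i) \<le> 0" by (intro sum_nonpos) auto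
  with assms show False by (simp add: is_profile_def)
qed

text \<open>In an equilibrium, the equilibrium cost of a type of positive mass is the
  cost of a resource it uses, hence at most the cost of any resource it may use.\<close>
lemma eq_cost_le_cost:
  assumes ne: "is_NE n f mu s" and R: "R \<in> types n" "mu R > 0" and kR: "k \<in> R"
  shows "eq_cost n f s R \<le> cost n f s k"
proof -
  have prof: "is_profile n mu s" using ne by (simp add: is_NE_def)
  define k0 where "k0 = (SOME k. k \<in> {1..n} \<and> s R k > 0)"
  have k0: "k0 \<in> {1..n} \<and> s R k0 > 0"
    unfolding k0_def by (rule someI_ex[OF profile_has_positive_entry[OF prof R]])
  have "eq_cost n f s R = cost n f s k0" unfolding eq_cost_def k0_def ..
  also have "\<dots> \<le> cost n f s k" using ne R(1) kR k0 by (simp add: is_NE_def)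
  finally show ?thesis .
qed


subsection \<open>Every Nash equilibrium is strong\<close>

definition improving_deviation ::
    "nat \<Rightarrow> (nat \<Rightarrow> real \<Rightarrow> real) \<Rightarrow> (nat set \<Rightarrow> nat \<Rightarrow> real) \<Rightarrow> (nat set \<Rightarrow> nat \<Rightarrow> real) \<Rightarrow> bool" where
  "improving_deviation n f s s' \<longleftrightarrow>
     (\<forall>R\<in>types n. \<forall>k\<in>{1..n}. s' R k > s R k \<longrightarrow> cost n f s' k < eq_cost n f s R)"

text \<open>Under an improving deviation from an equilibrium, a resource whose
  consumption by some type increases carries strictly less load than before:
  it became cheaper than that type's equilibrium cost, which is at most its
  old cost, and costs are nondecreasing.\<close>
lemma improving_deviation_lowers_load:
  assumes game: "is_game n f mu" and ne: "is_NE n f mu s"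
    and prof': "is_profile n mu s'" and dev: "improving_deviation n f s s'"
    and R: "R \<in> types n" and k: "k \<in> {1..n}" and incr: "s' R k > s R k"
  shows "load n s' k < load n s k"
proof -
  have prof: "is_profile n mu s" using ne by (simp add: is_NE_def)
  have "s R k \<ge> 0" using prof R k by (simp add: is_profile_def)
  have kR: "k \<in> R" using profile_support[OF prof' R k] \<open>s R k \<ge> 0\<close> incr by simp
  have "mu R > 0" using profile_entry_le_mass[OF prof' R k] \<open>s R k \<ge> 0\<close> incr by linarith
  have "cost n f s' k < eq_cost n f s R" using dev R k incr by (simp add: improving_deviation_def)
  also have "\<dots> \<le> cost n f s k" using eq_cost_le_cost[OF ne R \<open>mu R > 0\<close> kR] .
  finally have lt: "f k (load n s' k) < f k (load n s k)" by (simp add: cost_def)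
  show ?thesis
  proof (rule ccontr)
    assume "\<not> ?thesis"
    have "mono_on {0..} (f k)" using game k by (simp add: is_game_def)
    with \<open>\<not> ?thesis\<close> have "f k (load n s k) \<le> f k (load n s' k)"
      using load_nonneg[OF prof k] load_nonneg[OF prof' k] by (simp add: mono_onD)
    with lt show False by simp
  qed
qed

text \<open>Consequently no consumption increases at all: loads can only drop, but
  the total load is conserved.\<close>
lemma improving_deviation_no_increase:
  assumes game: "is_game n f mu" and ne: "is_NE n f mu s"
    and prof': "is_profile n mu s'" and dev: "improving_deviation n f s s'"
    and R: "R \<in> types n" and k: "k \<in> {1..n}"
  shows "s' R k \<le> s R k"
proof (rule ccontr)
  assume "\<not> ?thesis"
  have prof: "is_profile n mu s" using ne by (simp add: is_NE_def)
  have drop: "load n s' i < load n s i" if "i \<in> {1..n}" "\<exists>R\<in>types n. s' R i > s R i" for i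
    using improving_deviation_lowers_load[OF game ne prof' dev] that by blast
  have le: "load n s' i \<le> load n s i" if "i \<in> {1..n}" for i
  proof (cases "\<exists>R\<in>types n. s' R i > s R i")
    case True then show ?thesis using drop[OF that] by simp
  next
    case False then show ?thesis unfolding load_def by (intro sum_mono) auto
  qed
  have "load n s' k < load n s k" using drop[OF k] R \<open>\<not> s' R k \<le> s R k\<close> by (auto simp: not_le)
  then have "(\<Sum>i\<in>{1..n}. load n s' i) < (\<Sum>i\<in>{1..n}. load n s i)"
    using le k by (intro sum_strict_mono_ex1) auto
  then show False using total_load[OF prof] total_load[OF prof'] by simp
qed

theorem NE_is_SNE:
  assumes game: "is_game n f mu" and ne: "is_NE n f mu s"
  shows "is_SNE n f mu s"
  unfolding is_SNE_def
proof (intro conjI ne notI)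
  assume "\<exists>s'. is_profile n mu s' \<and> (\<exists>R\<in>types n. \<exists>j\<in>{1..n}. s' R j \<noteq> s R j) \<and>
            (\<forall>R\<in>types n. \<forall>k\<in>{1..n}. s' R k > s R k \<longrightarrow> cost n f s' k < eq_cost n f s R)"
  then obtain s' where prof': "is_profile n mu s'" and dev: "improving_deviation n f s s'"
    and "\<exists>R\<in>types n. \<exists>j\<in>{1..n}. s' R j \<noteq> s R j"
    unfolding improving_deviation_def by (elim exE conjE) simp
  then obtain R j where R: "R \<in> types n" and j: "j \<in> {1..n}" and differ: "s' R j \<noteq> s R j"
    by blast
  have prof: "is_profile n mu s" using ne by (simp add: is_NE_def)
  have sum_eq: "(\<Sum>i\<in>{1..n}. s' R i) = (\<Sum>i\<in>{1..n}. s R i)"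
    using prof prof' R by (simp add: is_profile_def)
  have "s' R j = s R j"
    using sum_mono_inv[OF sum_eq improving_deviation_no_increase[OF game ne prof' dev R] j] by simp
  with differ show False ..
qed


subsection \<open>The Beckmann potential\<close>

text \<open>Primitive of the cost of resource j, extended constantly to negative
  loads so that it is differentiable (two-sidedly) at every load.\<close>
definition cost_primitive :: "(nat \<Rightarrow> real \<Rightarrow> real) \<Rightarrow> nat \<Rightarrow> real \<Rightarrow> real" where
  "cost_primitive f j y = integral {-1..y} (\<lambda>t. f j (max 0 t))"

definition potential :: "nat \<Rightarrow> (nat \<Rightarrow> real \<Rightarrow> real) \<Rightarrow> (nat set \<Rightarrow> nat \<Rightarrow> real) \<Rightarrow> real" where
  "potential n f s = (\<Sum>j\<in>{1..n}. cost_primitive f j (load n s j))"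

lemma integral_has_real_derivative_at:
  fixes g :: "real \<Rightarrow> real"
  assumes "continuous_on UNIV g" "y > a"
  shows "((\<lambda>x. integral {a..x} g) has_real_derivative g y) (at y)"
proof -
  have "((\<lambda>x. integral {a..x} g) has_real_derivative g y) (at y within {a..y+1})"
    using assms by (intro integral_has_real_derivative) (auto intro: continuous_on_subset)
  moreover have "at y within {a..y+1} = at y"
    using assms by (intro at_within_interior) (simp add: interior_atLeastAtMost_real)
  ultimately show ?thesis by simp
qed

lemma cost_primitive_deriv:
  assumes "continuous_on {0..} (f j)" "y \<ge> 0"
  shows "(cost_primitive f j has_real_derivative f j y) (at y)"
proof -
  have "continuous_on UNIV (\<lambda>t. f j (max 0 t))"
    by (rule continuous_on_compose2[OF assms(1)]) (auto intro: continuous_intros)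
  from integral_has_real_derivative_at[OF this, of "-1" y] assms(2)
  have "(cost_primitive f j has_real_derivative f j (max 0 y)) (at y)"
    unfolding cost_primitive_def by simp
  with assms(2) show ?thesis by simp
qed

lemma cost_primitive_continuous:
  assumes "continuous_on {0..} (f j)"
  shows "continuous_on {0..} (cost_primitive f j)"
  using DERIV_isCont[OF cost_primitive_deriv[of f j, OF assms]]
  by (intro continuous_at_imp_continuous_on) simp

lemma shift_decreases_sum:
  fixes G1 G2 :: "real \<Rightarrow> real"
  assumes "(G1 has_real_derivative c1) (at a)" "(G2 has_real_derivative c2) (at b)" "c1 < c2"
  obtains d where "d > 0" "\<And>h. 0 < h \<Longrightarrow> h < d \<Longrightarrow> G1 (a + h) + G2 (b - h) < G1 a + G2 b"
proof -
  have "((\<lambda>t. G1 (a + t) + G2 (b - t)) has_real_derivative c1 * 1 + c2 * (0 - 1)) (at 0)"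
    using assms by (intro DERIV_add DERIV_chain2[of G1] DERIV_chain2[of G2])
      (auto intro!: derivative_eq_intros)
  then have "((\<lambda>t. G1 (a + t) + G2 (b - t)) has_real_derivative c1 - c2) (at 0)" by simp
  from DERIV_neg_dec_right[OF this] assms(3)
  obtain d where "d > 0" and "\<forall>h>0. h < d \<longrightarrow> G1 (a + h) + G2 (b - h) < G1 a + G2 b"
    by auto
  then show ?thesis by (intro that[of d]) auto
qed

definition shift_mass ::
    "(nat set \<Rightarrow> nat \<Rightarrow> real) \<Rightarrow> nat set \<Rightarrow> nat \<Rightarrow> nat \<Rightarrow> real \<Rightarrow> nat set \<Rightarrow> nat \<Rightarrow> real" where
  "shift_mass s R k j h = (\<lambda>R' i. s R' i + (if R' = R \<and> i = j then h else 0)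
                                          - (if R' = R \<and> i = k then h else 0))"

lemma shift_mass_profile:
  assumes prof: "is_profile n mu s" and R: "R \<in> types n" and jk: "j \<in> R" "k \<in> R" "j \<noteq> k"
    and h: "0 \<le> h" "h \<le> s R k"
  shows "is_profile n mu (shift_mass s R k j h)"
proof -
  have jk': "j \<in> {1..n}" "k \<in> {1..n}" using types_subset[OF R] jk by auto
  have "(\<Sum>i\<in>{1..n}. shift_mass s R k j h R' i) = (\<Sum>i\<in>{1..n}. s R' i)" for R'
    using jk' by (cases "R' = R") (simp_all add: shift_mass_def sum.distrib sum_subtractf)
  with prof h jk show ?thesis unfolding is_profile_def by (auto simp: shift_mass_def)
qed

lemma load_shift_mass:
  assumes "R \<in> types n"
  shows "load n (shift_mass s R k j h) i = load n s i + (if i = j then h else 0) - (if i = k then h else 0)"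
  using assms finite_types[of n]
  by (cases "i = j"; cases "i = k")
     (simp_all add: load_def shift_mass_def sum.distrib sum_subtractf sum.delta)

text \<open>A profile minimising the potential is a Nash equilibrium: otherwise a
  small shift of mass to a cheaper resource lowers the potential.\<close>
theorem potential_minimiser_is_NE:
  assumes cont: "\<forall>j\<in>{1..n}. continuous_on {0..} (f j)"
    and prof: "is_profile n mu s"
    and min: "\<And>s'. is_profile n mu s' \<Longrightarrow> potential n f s \<le> potential n f s'"
  shows "is_NE n f mu s"
  unfolding is_NE_def
proof (intro conjI prof ballI impI)
  fix R k j assume R: "R \<in> types n" and k: "k \<in> {1..n}" and jR: "j \<in> R" and pos: "s R k > 0"
  have j: "j \<in> {1..n}" using types_subset[OF R] jR by auto
  have kR: "k \<in> R" using profile_support[OF prof R k] pos by simp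
  show "cost n f s k \<le> cost n f s j"
  proof (rule ccontr)
    assume "\<not> ?thesis"
    then have lt: "f j (load n s j) < f k (load n s k)" by (simp add: cost_def)
    then have "j \<noteq> k" by auto
    have deriv: "(cost_primitive f i has_real_derivative f i (load n s i)) (at (load n s i))"
      if "i \<in> {1..n}" for i
      using cost_primitive_deriv cont that load_nonneg[OF prof that] by blast
    let ?F = "cost_primitive f"
    obtain d where d: "d > 0"
      and dec: "\<And>h. 0 < h \<Longrightarrow> h < d \<Longrightarrow>
                  ?F j (load n s j + h) + ?F k (load n s k - h) < ?F j (load n s j) + ?F k (load n s k)"
      using shift_decreases_sum[OF deriv[OF j] deriv[OF k] lt] by blast
    define h where "h = min (d / 2) (s R k)"
    have h: "0 < h" "h < d" "h \<le> s R k" using d pos by (auto simp: h_def)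
    define s' where "s' = shift_mass s R k j h"
    have "potential n f s' - potential n f s
        = (\<Sum>i\<in>{1..n}. (if i = j then ?F j (load n s j + h) - ?F j (load n s j) else 0)
                      + (if i = k then ?F k (load n s k - h) - ?F k (load n s k) else 0))"
      unfolding potential_def s'_def sum_subtractf[symmetric]
      by (intro sum.cong refl) (use \<open>j \<noteq> k\<close> in \<open>auto simp: load_shift_mass[OF R]\<close>)
    also have "\<dots> < 0" using dec[OF h(1,2)] j k by (simp add: sum.distrib)
    finally have "potential n f s' < potential n f s" by simp
    moreover have "is_profile n mu s'"
      unfolding s'_def using shift_mass_profile[OF prof R jR kR \<open>j \<noteq> k\<close>] h by simp
    ultimately show False using min[of s'] by simp
  qed
qed


subsection \<open>Existence of a potential minimiser\<close>

text \<open>Profiles, viewed as points of the product space indexed by the pairs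
  (type, resource), with all irrelevant coordinates set to zero.\<close>
definition profile_space :: "nat \<Rightarrow> (nat set \<Rightarrow> real) \<Rightarrow> (nat set \<times> nat \<Rightarrow> real) set" where
  "profile_space n mu = {x. is_profile n mu (curry x) \<and> (\<forall>p. p \<notin> types n \<times> {1..n} \<longrightarrow> x p = 0)}"

lemma compact_PiE_UNIV:
  fixes S :: "'a \<Rightarrow> real set"
  assumes "\<And>i. compact (S i)"
  shows "compact (PiE UNIV S)"
  using assms compactin_PiE[of "\<lambda>_. euclidean" UNIV S] by (simp add: euclidean_product_topology)

lemma continuous_on_coordinate [continuous_intros]:
  "continuous_on S (\<lambda>x :: 'a \<Rightarrow> real. x p)"
  by (rule continuous_on_subset[OF continuous_on_product_coordinates]) simp

lemma closed_profile_space: "closed (profile_space n mu)"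
  unfolding profile_space_def is_profile_def curry_def Ball_def
  by (intro closed_Collect_conj closed_Collect_all closed_Collect_imp closed_Collect_eq
        closed_Collect_le continuous_intros) auto

text \<open>The profile space is compact: it is closed and lies in a box, since each consumption is bounded by the mass of its type.\<close>
lemma compact_profile_space: "compact (profile_space n mu)"
proof -
  let ?B = "PiE UNIV (\<lambda>p. if p \<in> types n \<times> {1..n} then {0..mu (fst p)} else {0})"
  have "profile_space n mu \<subseteq> ?B"
  proof
    fix x assume x: "x \<in> profile_space n mu"
    have "0 \<le> x (R, j) \<and> x (R, j) \<le> mu R" if "R \<in> types n" "j \<in> {1..n}" for R j
      using x profile_entry_le_mass[of n mu "curry x" R j] that
      by (auto simp: profile_space_def is_profile_def)
    with x show "x \<in> ?B" by (auto simp: profile_space_def PiE_def)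
  qed
  moreover have "compact ?B" by (rule compact_PiE_UNIV) auto
  ultimately have "compact (?B \<inter> profile_space n mu)"
    using closed_profile_space by (intro compact_Int_closed)
  with \<open>profile_space n mu \<subseteq> ?B\<close> show ?thesis by (simp add: Int_absorb1)
qed

lemma profile_space_nonempty:
  assumes "\<forall>R\<in>types n. mu R \<ge> 0"
  shows "profile_space n mu \<noteq> {}"
proof -
  have Min: "Min R \<in> R" "Min R \<in> {1..n}" if "R \<in> types n" for R
    using that types_subset[OF that] finite_subset[OF types_subset[OF that]]
    by (auto intro!: Min_in simp: types_def)
  define x where "x = (\<lambda>(R, j). if R \<in> types n \<and> j = Min R then mu R else 0)"
  have "x \<in> profile_space n mu"
    using assms Min unfolding profile_space_def is_profile_def x_def
    by (auto simp: sum.delta')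
  then show ?thesis by auto
qed

lemma restricted_profile:
  assumes "is_profile n mu s"
  defines "x \<equiv> (\<lambda>(R, j). if R \<in> types n \<and> j \<in> {1..n} then s R j else 0)"
  shows "x \<in> profile_space n mu" and "potential n f (curry x) = potential n f s"
proof -
  show "x \<in> profile_space n mu"
    using assms unfolding profile_space_def is_profile_def x_def by auto
  have "load n (curry x) j = load n s j" if "j \<in> {1..n}" for j
    using that unfolding load_def x_def by (intro sum.cong) auto
  then show "potential n f (curry x) = potential n f s"
    unfolding potential_def by (intro sum.cong) auto
qed

text \<open>The potential attains its minimum over all profiles: minimise over the
  compact profile space, then compare with restrictions of arbitrary profiles.\<close>
theorem potential_has_minimiser:
  assumes cont: "\<forall>j\<in>{1..n}. continuous_on {0..} (f j)"
    and mass: "\<forall>R\<in>types n. mu R \<ge> 0"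
  obtains s where "is_profile n mu s" "\<And>s'. is_profile n mu s' \<Longrightarrow> potential n f s \<le> potential n f s'"
proof -
  let ?X = "profile_space n mu"
  have load_cont: "continuous_on ?X (\<lambda>x. load n (curry x) j)" for j
    unfolding load_def curry_def by (intro continuous_intros)
  have "continuous_on ?X (\<lambda>x. potential n f (curry x))"
    unfolding potential_def using cont load_nonneg
    by (intro continuous_on_sum continuous_on_compose2[OF cost_primitive_continuous load_cont])
      (auto simp: profile_space_def)
  from continuous_attains_inf[OF compact_profile_space profile_space_nonempty[OF mass] this]
  obtain x0 where x0: "x0 \<in> ?X" and min: "\<forall>x\<in>?X. potential n f (curry x0) \<le> potential n f (curry x)"
    by blast
  show ?thesis
  proof (rule that[of "curry x0"])
    show "is_profile n mu (curry x0)" using x0 by (simp add: profile_space_def)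
    fix s' assume prof': "is_profile n mu s'"
    show "potential n f (curry x0) \<le> potential n f s'"
      using bspec[OF min restricted_profile(1)[OF prof']] restricted_profile(2)[OF prof'] by simp
  qed
qed


theorem mainTheorem1:
  fixes n :: nat and f :: "nat \<Rightarrow> real \<Rightarrow> real" and mu :: "nat set \<Rightarrow> real"
  assumes "is_game n f mu"
    and "\<forall>j\<in>{1..n}. continuous_on {0..} (f j)"
  shows "\<exists>s. is_SNE n f mu s"
proof -
  have "\<forall>R\<in>types n. mu R \<ge> 0" using assms(1) by (simp add: is_game_def)
  then obtain s where "is_profile n mu s"
    and "\<And>s'. is_profile n mu s' \<Longrightarrow> potential n f s \<le> potential n f s'"
    using potential_has_minimiser[OF assms(2)] by blast
  then have "is_NE n f mu s" using potential_minimiser_is_NE[OF assms(2)] by blast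
  then show ?thesis using NE_is_SNE[OF assms(1)] by blast
qed

end
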